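(* Let $\gamma>0$ and $S=(S_1,\ldots,S_n)$ be nonnegative nonzero symmetric $p\times p$ matrices. Then for all $\Delta,\Delta'\in\mathcal D_n^+$, $$d_s\big(\Lambda^S(\Delta),\Lambda^S(\Delta')\big)\le\max\big(\phi^S_\gamma(\Delta),\phi^S_\gamma(\Delta')\big)\,d_s(\Delta,\Delta'),$$ and in particular $\Lambda^S:\mathcal D_n^+\to\mathcal D_n^+$ is stable.
   Context: $\mathcal D_n^+$: $n\times n$ diagonal matrices with positive diagonal entries; $d_s(\Delta,\Delta')=\max_i\frac{|\Delta_i-\Delta'_i|}{\sqrt{\Delta_i\Delta'_i}}$; a map is stable if it is $1$-Lipschitz for $d_s$. $Q_\gamma(S,\Delta)=\big(\frac1n\sum_i\Delta_iS_i+\gamma I_p\big)^{-1}$, $\phi^S_\gamma(\Delta)=\|I_p-\gamma Q_\gamma(S,\Delta)\|$ (spectral norm). $\Lambda^S(\Delta)\in\mathcal D_n^+$ is the unique solution of $\Lambda^S(\Delta)_i=\frac1n\operatorname{tr}\Big(S_i\big(\frac1n\sum_{j=1}^n\frac{\Delta_jS_j}{1+\Delta_j\Lambda^S(\Delta)_j}+\gamma I_p\big)^{-1}\Big)$, $i\in[n]$. *)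

theory Defs
  imports "HOL-Analysis.Analysis"
begin

text \<open>Elements of D_n^+ are represented by their diagonal, a vector in real^'n
  with positive entries; n = CARD('n), p = CARD('p).\<close>

definition pos_diag :: "real^'n \<Rightarrow> bool" where
  "pos_diag \<Delta> \<longleftrightarrow> (\<forall>i. 0 < \<Delta>$i)"

definition d_s :: "real^'n::finite \<Rightarrow> real^'n \<Rightarrow> real" where
  "d_s \<Delta> \<Delta>' = Max (range (\<lambda>i. \<bar>\<Delta>$i - \<Delta>'$i\<bar> / sqrt (\<Delta>$i * \<Delta>'$i)))"

definition stable :: "(real^'n::finite \<Rightarrow> real^'n) \<Rightarrow> bool" where
  "stable f \<longleftrightarrow> (\<forall>\<Delta> \<Delta>'. pos_diag \<Delta> \<longrightarrow> pos_diag \<Delta>' \<longrightarrow>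
      d_s (f \<Delta>) (f \<Delta>') \<le> d_s \<Delta> \<Delta>')"

definition nonneg_sym :: "real^'p^'p \<Rightarrow> bool" where
  "nonneg_sym A \<longleftrightarrow> transpose A = A \<and> (\<forall>x. 0 \<le> x \<bullet> (A *v x))"

definition Qmat :: "real \<Rightarrow> ('n::finite \<Rightarrow> real^'p^'p) \<Rightarrow> real^'n \<Rightarrow> real^'p^'p" where
  "Qmat \<gamma> S \<Delta> = matrix_inv ((1 / real CARD('n)) *\<^sub>R (\<Sum>i\<in>UNIV. (\<Delta>$i) *\<^sub>R S i)
       + \<gamma> *\<^sub>R mat 1)"

definition phi :: "real \<Rightarrow> ('n::finite \<Rightarrow> real^'p^'p) \<Rightarrow> real^'n \<Rightarrow> real" where
  "phi \<gamma> S \<Delta> = onorm (\<lambda>x. (mat 1 - \<gamma> *\<^sub>R Qmat \<gamma> S \<Delta>) *v x)"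

definition Lambda_eq :: "real \<Rightarrow> ('n::finite \<Rightarrow> real^'p^'p) \<Rightarrow> real^'n \<Rightarrow> real^'n \<Rightarrow> bool" where
  "Lambda_eq \<gamma> S \<Delta> L \<longleftrightarrow> pos_diag L \<and>
     (\<forall>i. L$i = (1 / real CARD('n)) * trace (S i ** matrix_inv
        ((1 / real CARD('n)) *\<^sub>R (\<Sum>j\<in>UNIV. (\<Delta>$j / (1 + \<Delta>$j * L$j)) *\<^sub>R S j)
          + \<gamma> *\<^sub>R mat 1)))"

definition LambdaS :: "real \<Rightarrow> ('n::finite \<Rightarrow> real^'p^'p) \<Rightarrow> real^'n \<Rightarrow> real^'n" where
  "LambdaS \<gamma> S \<Delta> = (THE L. Lambda_eq \<gamma> S \<Delta> L)"

end

theory Submission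
  imports Defs
begin

text \<open>Write \<open>A D = (1/n) \<Sum>j. D_j S_j\<close> and \<open>Q D = (A D + \<gamma> I)\<^sup>-\<^sup>1\<close>. The defining equation of
  \<open>\<Lambda>\<^sup>S(\<Delta>)\<close> says that \<open>\<Lambda>\<close> is a fixed point of \<open>L \<mapsto> T (damped \<Delta> L)\<close>, where
  \<open>T D = ((1/n) tr (S_i Q D))\<^sub>i\<close> and \<open>damped \<Delta> L = (\<Delta>_j / (1 + \<Delta>_j L_j))\<^sub>j\<close>.
  Writing \<open>S_i\<close> as a Gram matrix, \<open>T D\<close> becomes a sum of quadratic forms of \<open>Q D\<close>; the
  resolvent identity \<open>Q D - Q D' = Q D (A D' - A D) Q D'\<close> and two Cauchy--Schwarz inequalities give
  \<open>|T D_i - T D'_i| \<le> e sqrt (\<phi>(E) T D_i) sqrt (\<phi>(E') T D'_i)\<close> whenever \<open>D \<le> E\<close>, \<open>D' \<le> E'\<close> and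
  \<open>|D_j - D'_j| \<le> e sqrt (D_j D'_j)\<close> for all \<open>j\<close>. As \<open>\<phi> < 1\<close>, \<open>T\<close> contracts \<open>d_s\<close> by the factor
  \<open>max \<phi>(E) \<phi>(E')\<close>, while \<open>damped\<close> does not increase \<open>d_s\<close>: it is built from inversion, which
  preserves \<open>d_s\<close>, and addition, which does not increase it. A fixed point exists by Brouwer's
  theorem and is unique by the contraction estimate; comparing the fixed points for \<open>\<Delta>\<close> and
  \<open>\<Delta>'\<close> gives the bound, and stability follows from \<open>\<phi> < 1\<close>.\<close>


section \<open>Relative distance of positive reals\<close>

text \<open>The lemmas named \<open>rel_dist\<close> concern the relation \<open>|x - y| \<le> e * sqrt (x * y)\<close>, the
  one-coordinate form of \<open>d_s\<close>.\<close>

lemma rel_dist_inverse: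
  fixes p p' e :: real
  assumes "0 < p" "0 < p'" and "\<bar>p - p'\<bar> \<le> e * sqrt (p * p')"
  shows "\<bar>1/p - 1/p'\<bar> \<le> e * sqrt (1/p * (1/p'))"
proof -
  define s where "s = sqrt (p * p')"
  have s: "0 < s" "s * s = p * p'" using assms by (simp_all add: s_def)
  have "\<bar>1/p - 1/p'\<bar> = \<bar>p - p'\<bar> / (s * s)"
    using assms s by (simp add: field_simps abs_minus_commute)
  also have "\<dots> \<le> e * s / (s * s)"
    using assms(3) s by (simp add: s_def divide_right_mono)
  also have "\<dots> = e * (1 / s)" using s(1) by simp
  also have "1 / s = sqrt (1/p * (1/p'))" by (simp add: s_def real_sqrt_divide)
  finally show ?thesis .
qed

lemma sqrt_mult_add_le:
  fixes a b c d :: real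
  assumes "0 \<le> a" "0 \<le> b" "0 \<le> c" "0 \<le> d"
  shows "sqrt (a * b) + sqrt (c * d) \<le> sqrt ((a + c) * (b + d))"
proof -
  have "2 * sqrt (a * d) * sqrt (c * b) \<le> a * d + c * b"
    using sum_squares_bound[of "sqrt (a * d)" "sqrt (c * b)"] assms by (simp add: power2_eq_square)
  then have "(sqrt (a * b) + sqrt (c * d))\<^sup>2 \<le> (a + c) * (b + d)"
    using assms by (simp add: power2_eq_square algebra_simps real_sqrt_mult)
  then show ?thesis using assms by (simp add: real_le_rsqrt)
qed

lemma rel_dist_add:
  fixes a a' b b' e :: real
  assumes "0 \<le> a" "0 \<le> a'" "0 \<le> b" "0 \<le> b'" "0 \<le> e"
    and "\<bar>a - a'\<bar> \<le> e * sqrt (a * a')" "\<bar>b - b'\<bar> \<le> e * sqrt (b * b')"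
  shows "\<bar>(a + b) - (a' + b')\<bar> \<le> e * sqrt ((a + b) * (a' + b'))"
proof -
  have "\<bar>(a + b) - (a' + b')\<bar> \<le> e * (sqrt (a * a') + sqrt (b * b'))"
    using assms(6,7) by (simp add: algebra_simps)
  also have "\<dots> \<le> e * sqrt ((a + b) * (a' + b'))"
    using assms by (intro mult_left_mono sqrt_mult_add_le) auto
  finally show ?thesis .
qed

text \<open>Writing \<open>x / (1 + x * y) = 1 / (1/x + y)\<close>, both lemmas below reduce to the behaviour of the
  relative distance under inversion and addition.\<close>

lemma rel_dist_damped:
  fixes x x' y y' e :: real
  assumes "0 < x" "0 < x'" "0 \<le> y" "0 \<le> y'" "0 \<le> e"
    and "\<bar>x - x'\<bar> \<le> e * sqrt (x * x')" "\<bar>y - y'\<bar> \<le> e * sqrt (y * y')"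
  shows "\<bar>x / (1 + x * y) - x' / (1 + x' * y')\<bar> \<le> e * sqrt (x / (1 + x * y) * (x' / (1 + x' * y')))"
proof -
  have inv: "\<bar>1/x - 1/x'\<bar> \<le> e * sqrt (1/x * (1/x'))"
    using assms by (intro rel_dist_inverse) auto
  have "\<bar>(1/x + y) - (1/x' + y')\<bar> \<le> e * sqrt ((1/x + y) * (1/x' + y'))"
    using assms inv by (intro rel_dist_add) auto
  then have "\<bar>1 / (1/x + y) - 1 / (1/x' + y')\<bar> \<le> e * sqrt (1 / (1/x + y) * (1 / (1/x' + y')))"
    using assms by (intro rel_dist_inverse) (auto intro: add_pos_nonneg)
  moreover have "x / (1 + x * y) = 1 / (1/x + y)" "x' / (1 + x' * y') = 1 / (1/x' + y')"
    using assms by (simp_all add: field_simps)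
  ultimately show ?thesis by simp
qed

lemma rel_dist_damped_lipschitz:
  fixes x y y' :: real
  assumes "0 < x" "0 \<le> y" "0 \<le> y'"
  shows "\<bar>x / (1 + x * y) - x / (1 + x * y')\<bar>
    \<le> x * \<bar>y - y'\<bar> * sqrt (x / (1 + x * y) * (x / (1 + x * y')))"
proof -
  have "(1/x)\<^sup>2 \<le> (1/x + y) * (1/x + y')"
    unfolding power2_eq_square using assms by (intro mult_mono) auto
  then have "1/x \<le> sqrt ((1/x + y) * (1/x + y'))" by (rule real_le_rsqrt)
  then have "\<bar>(1/x + y) - (1/x + y')\<bar> \<le> x * \<bar>y - y'\<bar> * sqrt ((1/x + y) * (1/x + y'))"
    using assms mult_left_mono[of "1/x" _ "x * \<bar>y - y'\<bar>"] by simp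
  then have "\<bar>1 / (1/x + y) - 1 / (1/x + y')\<bar>
      \<le> x * \<bar>y - y'\<bar> * sqrt (1 / (1/x + y) * (1 / (1/x + y')))"
    using assms by (intro rel_dist_inverse) (auto intro: add_pos_nonneg)
  moreover have "x / (1 + x * y) = 1 / (1/x + y)" "x / (1 + x * y') = 1 / (1/x + y')"
    using assms by (simp_all add: field_simps)
  ultimately show ?thesis by simp
qed

lemma sum_sqrt_mult_le:
  fixes a b :: "'a \<Rightarrow> real"
  assumes "\<And>k. k \<in> K \<Longrightarrow> 0 \<le> a k" "\<And>k. k \<in> K \<Longrightarrow> 0 \<le> b k"
  shows "(\<Sum>k\<in>K. sqrt (a k) * sqrt (b k)) \<le> sqrt (\<Sum>k\<in>K. a k) * sqrt (\<Sum>k\<in>K. b k)"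
  using L2_set_mult_ineq[where f="\<lambda>k. sqrt (a k)" and g="\<lambda>k. sqrt (b k)" and A=K] assms
  by (simp add: L2_set_def cong: sum.cong)

lemma pos_diag_nonneg: "pos_diag L \<Longrightarrow> 0 \<le> L"
  by (simp add: pos_diag_def less_eq_vec_def less_imp_le)

lemma d_s_le_iff:
  fixes x y :: "real^'n::finite"
  assumes "pos_diag x" "pos_diag y"
  shows "d_s x y \<le> e \<longleftrightarrow> (\<forall>i. \<bar>x$i - y$i\<bar> \<le> e * sqrt (x$i * y$i))"
proof -
  have "0 < sqrt (x$i * y$i)" for i using assms by (simp add: pos_diag_def)
  then show ?thesis unfolding d_s_def by (simp add: divide_le_eq)
qed

lemma d_s_component_le:
  fixes x y :: "real^'n::finite"
  assumes "pos_diag x" "pos_diag y"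
  shows "\<bar>x$i - y$i\<bar> \<le> d_s x y * sqrt (x$i * y$i)"
  using d_s_le_iff[OF assms] by blast

lemma d_s_nonneg:
  fixes x y :: "real^'n::finite"
  assumes "pos_diag x" "pos_diag y"
  shows "0 \<le> d_s x y"
proof -
  obtain i :: 'n where True by simp
  have "0 < sqrt (x$i * y$i)" using assms by (simp add: pos_diag_def)
  moreover have "0 \<le> d_s x y * sqrt (x$i * y$i)"
    using d_s_component_le[OF assms, of i] by linarith
  ultimately show ?thesis by (simp add: zero_le_mult_iff)
qed

lemma d_s_le_0_imp_eq:
  fixes x y :: "real^'n::finite"
  assumes "pos_diag x" "pos_diag y" "d_s x y \<le> 0"
  shows "x = y"
  using assms d_s_le_iff[OF assms(1,2), of 0] by (simp add: vec_eq_iff)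

lemma d_s_self: "d_s x x = 0"
  by (simp add: d_s_def)

definition damped :: "real^'n \<Rightarrow> real^'n \<Rightarrow> real^'n" where
  "damped E L = (\<chi> j. E$j / (1 + E$j * L$j))"

lemma damped_pos_le:
  assumes "pos_diag E" "0 \<le> L"
  shows "pos_diag (damped E L)" "damped E L \<le> E"
proof -
  have E: "0 < E$j" and L: "0 \<le> L$j" for j
    using assms by (simp_all add: pos_diag_def less_eq_vec_def)
  have "0 < damped E L $ j \<and> damped E L $ j \<le> E$j" for j
  proof -
    have "1 \<le> 1 + E$j * L$j" using E[of j] L[of j] by simp
    then show ?thesis using E[of j] by (simp add: damped_def divide_le_eq)
  qed
  then show "pos_diag (damped E L)" "damped E L \<le> E"
    by (simp_all add: pos_diag_def less_eq_vec_def)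
qed

lemma damped_rel_dist:
  assumes "pos_diag E" "pos_diag E'" "pos_diag L" "pos_diag L'"
    and "d_s E E' \<le> e" "d_s L L' \<le> e"
  shows "\<bar>damped E L $ j - damped E' L' $ j\<bar> \<le> e * sqrt (damped E L $ j * damped E' L' $ j)"
proof -
  have "0 \<le> e" using d_s_nonneg[OF assms(1,2)] assms(5) by linarith
  then show ?thesis
    using assms d_s_le_iff[OF assms(1,2)] d_s_le_iff[OF assms(3,4)]
    unfolding damped_def vec_lambda_beta
    by (intro rel_dist_damped) (simp_all add: pos_diag_def less_imp_le)
qed

lemma damped_lipschitz:
  assumes "pos_diag E" "0 \<le> L" "0 \<le> L'"
  shows "\<bar>damped E L $ j - damped E L' $ j\<bar>
    \<le> E$j * \<bar>L$j - L'$j\<bar> * sqrt (damped E L $ j * damped E L' $ j)"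
  using assms unfolding damped_def vec_lambda_beta
  by (intro rel_dist_damped_lipschitz) (simp_all add: pos_diag_def less_eq_vec_def)

section \<open>Positive semidefinite matrices\<close>

lemma nonneg_sym_inner_commute:
  assumes "nonneg_sym M"
  shows "x \<bullet> (M *v y) = (M *v x) \<bullet> y"
  using assms unfolding nonneg_sym_def
  by (metis dot_lmul_matrix inner_commute transpose_matrix_vector)

lemma quadratic_nonneg_imp_discriminant:
  fixes a b c :: real
  assumes "\<And>t. 0 \<le> a + 2 * t * b + t * t * c" and "0 \<le> c"
  shows "b * b \<le> a * c"
proof (cases "c = 0")
  case True
  show ?thesis
  proof (cases "b = 0")
    case False
    have "0 \<le> a + 2 * (-(a + 1) / (2 * b)) * b + (-(a + 1) / (2 * b)) * (-(a + 1) / (2 * b)) * c"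
      by (rule assms(1))
    with True False show ?thesis by (simp add: field_simps)
  qed (simp add: True)
next
  case False
  then have c: "0 < c" using assms(2) by simp
  have "0 \<le> a + 2 * (-b / c) * b + (-b / c) * (-b / c) * c" by (rule assms(1))
  also have "\<dots> = (a * c - b * b) / c" using c by (simp add: field_simps)
  finally show ?thesis using c by (simp add: zero_le_divide_iff)
qed

lemma nonneg_sym_cauchy_schwarz:
  assumes "nonneg_sym M"
  shows "(x \<bullet> (M *v y)) * (x \<bullet> (M *v y)) \<le> (x \<bullet> (M *v x)) * (y \<bullet> (M *v y))"
proof (rule quadratic_nonneg_imp_discriminant)
  fix t
  have "(x + t *\<^sub>R y) \<bullet> (M *v (x + t *\<^sub>R y))
      = x \<bullet> (M *v x) + 2 * t * (x \<bullet> (M *v y)) + t * t * (y \<bullet> (M *v y))"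
    using nonneg_sym_inner_commute[OF assms, of y x]
    by (simp add: matrix_vector_right_distrib inner_add_left inner_add_right
        matrix_vector_mult_scaleR inner_commute algebra_simps)
  then show "0 \<le> x \<bullet> (M *v x) + 2 * t * (x \<bullet> (M *v y)) + t * t * (y \<bullet> (M *v y))"
    using assms unfolding nonneg_sym_def by metis
qed (use assms in \<open>simp add: nonneg_sym_def\<close>)

lemma nonneg_sym_abs_inner_le:
  assumes "nonneg_sym M"
  shows "\<bar>x \<bullet> (M *v y)\<bar> \<le> sqrt (x \<bullet> (M *v x)) * sqrt (y \<bullet> (M *v y))"
proof -
  have "(x \<bullet> (M *v y))\<^sup>2 \<le> (x \<bullet> (M *v x)) * (y \<bullet> (M *v y))"
    using nonneg_sym_cauchy_schwarz[OF assms] by (simp add: power2_eq_square)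
  then show ?thesis by (metis real_sqrt_abs real_sqrt_le_mono real_sqrt_mult)
qed

lemma nonneg_sym_diag_eq_0:
  assumes "nonneg_sym M" "M$k$k = 0"
  shows "M$k$j = 0"
  using nonneg_sym_cauchy_schwarz[OF assms(1), of "axis k 1" "axis j 1"] assms(2)
  by (simp add: matrix_vector_mult_basis inner_axis' column_def mult_le_0_iff) linarith

lemma rank_one_mult_vec:
  fixes v :: "real^'p::finite"
  shows "(\<chi> i j. c * v$i * v$j) *v x = (c * (v \<bullet> x)) *\<^sub>R v"
  by (simp add: vec_eq_iff matrix_vector_mult_def inner_vec_def sum_distrib_left algebra_simps)

text \<open>One step of a Cholesky factorisation.\<close>

lemma nonneg_sym_clear_row:
  fixes M :: "real^'p::finite^'p"
  assumes M: "nonneg_sym M"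
  obtains c where "0 \<le> c" "nonneg_sym (M - (\<chi> i j. c * M$i$k * M$j$k))"
    "\<And>j. M$k$j = c * M$k$k * M$j$k"
proof (cases "M$k$k = 0")
  case True
  moreover have "(\<chi> i j. 0 * M$i$k * M$j$k) = (0 :: real^'p^'p)" by (simp add: vec_eq_iff)
  ultimately show ?thesis using that[of 0] M nonneg_sym_diag_eq_0[OF M] by simp
next
  case False
  have sym: "M$i$j = M$j$i" for i j
    using M unfolding nonneg_sym_def by (metis transpose_def vec_lambda_beta)
  have "0 \<le> axis k 1 \<bullet> (M *v axis k 1)" using M by (simp add: nonneg_sym_def)
  then have "0 \<le> M$k$k" by (simp add: matrix_vector_mult_basis inner_axis' column_def)
  with False have pos: "0 < M$k$k" by simp
  define v where "v = column k M"
  define R where "R = (\<chi> i j. (1 / M$k$k) * M$i$k * M$j$k)"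
  have R: "R = (\<chi> i j. (1 / M$k$k) * v$i * v$j)" by (simp add: R_def v_def column_def)
  have "x \<bullet> (R *v x) \<le> x \<bullet> (M *v x)" for x
  proof -
    have vx: "v \<bullet> x = axis k 1 \<bullet> (M *v x)"
      using nonneg_sym_inner_commute[OF M, of "axis k 1" x]
      by (simp add: v_def matrix_vector_mult_basis)
    have "(v \<bullet> x) * (v \<bullet> x) \<le> M$k$k * (x \<bullet> (M *v x))"
      using nonneg_sym_cauchy_schwarz[OF M, of "axis k 1" x] unfolding vx
      by (simp add: matrix_vector_mult_basis inner_axis' column_def)
    then show ?thesis
      unfolding R rank_one_mult_vec using pos by (simp add: divide_le_eq mult.commute inner_commute)
  qed
  moreover have "transpose (M - R) = M - R"
    by (simp add: vec_eq_iff transpose_def R_def) (metis sym mult.commute)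
  ultimately have "nonneg_sym (M - R)"
    using M unfolding nonneg_sym_def
    by (simp add: matrix_vector_mult_diff_rdistrib inner_diff_right)
  then show ?thesis
  proof (intro that[of "1 / M$k$k"])
    show "M$k$j = 1 / M$k$k * M$k$k * M$j$k" for j using pos sym[of k j] by simp
  qed (use pos R_def in simp_all)
qed

lemma nonneg_sym_gram_supported:
  fixes M :: "real^'p::finite^'p"
  assumes "finite F" "nonneg_sym M" "\<And>i j. i \<notin> F \<Longrightarrow> M$i$j = 0"
  shows "\<exists>u. \<forall>i j. M$i$j = (\<Sum>l\<in>F. u l $ i * u l $ j)"
  using assms
proof (induction F arbitrary: M rule: finite_induct)
  case empty
  then show ?case by simp
next
  case (insert k F)
  obtain c where c: "0 \<le> c" "nonneg_sym (M - (\<chi> i j. c * M$i$k * M$j$k))"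
    "\<And>j. M$k$j = c * M$k$k * M$j$k"
    using nonneg_sym_clear_row[OF insert.prems(1), where k=k] by blast
  define M' where "M' = M - (\<chi> i j. c * M$i$k * M$j$k)"
  have M': "M'$i$j = M$i$j - c * M$i$k * M$j$k" for i j by (simp add: M'_def)
  have "M'$i$j = 0" if "i \<notin> F" for i j
  proof (cases "i = k")
    case True
    then show ?thesis using c(3)[of j] by (simp add: M')
  next
    case False
    then show ?thesis using insert.prems(2) \<open>i \<notin> F\<close> by (simp add: M')
  qed
  then obtain u where u: "\<forall>i j. M'$i$j = (\<Sum>l\<in>F. u l $ i * u l $ j)"
    using insert.IH c(2) unfolding M'_def by blast
  define v where "v = sqrt c *\<^sub>R column k M"
  have v: "v$i * v$j = c * M$i$k * M$j$k" for i j
    using c(1) by (simp add: v_def column_def algebra_simps)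
  have "M$i$j = (\<Sum>l\<in>insert k F. (u(k := v)) l $ i * (u(k := v)) l $ j)" for i j
  proof -
    have "(\<Sum>l\<in>F. (u(k := v)) l $ i * (u(k := v)) l $ j) = M'$i$j"
      using insert.hyps u by (auto intro: sum.cong)
    then show ?thesis using insert.hyps v by (simp add: M')
  qed
  then show ?case by blast
qed

lemma nonneg_sym_gram:
  fixes M :: "real^'p::finite^'p"
  assumes "nonneg_sym M"
  shows "\<exists>u::'p \<Rightarrow> real^'p. \<forall>i j. M$i$j = (\<Sum>l\<in>UNIV. u l $ i * u l $ j)"
  using nonneg_sym_gram_supported[of UNIV M] assms by simp

lemma trace_gram_mult:
  fixes M X :: "real^'p::finite^'p"
  assumes "\<forall>i j. M$i$j = (\<Sum>l\<in>L. u l $ i * u l $ j)"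
  shows "trace (M ** X) = (\<Sum>l\<in>L. u l \<bullet> (X *v u l))"
proof -
  have "trace (M ** X) = (\<Sum>i\<in>UNIV. \<Sum>j\<in>UNIV. \<Sum>l\<in>L. u l $ i * u l $ j * X$j$i)"
    by (simp add: trace_def matrix_matrix_mult_def assms sum_distrib_right)
  also have "\<dots> = (\<Sum>l\<in>L. \<Sum>i\<in>UNIV. \<Sum>j\<in>UNIV. u l $ i * (X$i$j * u l $ j))"
    by (subst sum.swap, subst (2) sum.swap, subst sum.swap) (simp add: algebra_simps)
  also have "\<dots> = (\<Sum>l\<in>L. u l \<bullet> (X *v u l))"
    by (simp add: inner_vec_def matrix_vector_mult_def sum_distrib_left)
  finally show ?thesis .
qed

section \<open>The resolvent of a weighted mean\<close>

lemma matrix_inv_of_inj: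
  fixes B :: "real^'p::finite^'p"
  assumes "inj ((*v) B)"
  shows "matrix_inv B ** B = mat 1" "B ** matrix_inv B = mat 1"
proof -
  obtain B' where "B' ** B = mat 1" using assms matrix_left_invertible_injective by blast
  then have "B ** B' = mat 1 \<and> B' ** B = mat 1" using matrix_left_right_inverse by blast
  then have "B ** matrix_inv B = mat 1 \<and> matrix_inv B ** B = mat 1"
    unfolding matrix_inv_def by (rule someI)
  then show "matrix_inv B ** B = mat 1" "B ** matrix_inv B = mat 1" by blast+
qed

lemma sum_matrix_vector_mult:
  fixes f :: "'a \<Rightarrow> real^'p::finite^'q::finite"
  shows "(\<Sum>i\<in>A. f i) *v y = (\<Sum>i\<in>A. f i *v y)"
  by (induction A rule: infinite_finite_induct) (simp_all add: matrix_vector_mult_add_rdistrib)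

lemma scaleR_mat_1_mult_vec: "(c *\<^sub>R mat 1) *v y = c *\<^sub>R y"
  for y :: "real^'p::finite"
  by (simp flip: scaleR_matrix_vector_assoc)

lemma shifted_mult_vec: "(M + c *\<^sub>R mat 1) *v y = M *v y + c *\<^sub>R y"
  for M :: "real^'p::finite^'p"
  by (simp add: matrix_vector_mult_add_rdistrib scaleR_mat_1_mult_vec)

lemma norm_add_scaleR_ge:
  fixes a y :: "'a::real_inner"
  assumes "0 \<le> a \<bullet> y" "0 \<le> c"
  shows "(norm a)\<^sup>2 + c\<^sup>2 * (norm y)\<^sup>2 \<le> (norm (a + c *\<^sub>R y))\<^sup>2"
proof -
  have "(norm (a + c *\<^sub>R y))\<^sup>2 = (norm a)\<^sup>2 + 2 * c * (a \<bullet> y) + c\<^sup>2 * (norm y)\<^sup>2"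
    unfolding power2_norm_eq_inner
    by (simp add: inner_add_left inner_add_right inner_commute[of y a] power2_eq_square algebra_simps)
  then show ?thesis using assms by simp
qed

lemma pythagorean_ratio_bound:
  fixes t s w M c :: real
  assumes "0 \<le> t" "0 \<le> M" "0 < c" "t \<le> M * s" "t\<^sup>2 + c\<^sup>2 * s\<^sup>2 \<le> w\<^sup>2"
  shows "t \<le> M / sqrt (M\<^sup>2 + c\<^sup>2) * \<bar>w\<bar>"
proof -
  define r where "r = sqrt (M\<^sup>2 + c\<^sup>2)"
  have r: "0 < r" "r\<^sup>2 = M\<^sup>2 + c\<^sup>2" using assms by (simp_all add: r_def add_nonneg_pos)
  have "t\<^sup>2 \<le> M\<^sup>2 * s\<^sup>2" using assms by (metis power_mono power_mult_distrib)
  from mult_left_mono[OF this, of "c\<^sup>2"]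
  have "t\<^sup>2 * r\<^sup>2 \<le> M\<^sup>2 * (t\<^sup>2 + c\<^sup>2 * s\<^sup>2)" unfolding r(2) by (simp add: algebra_simps)
  also have "\<dots> \<le> M\<^sup>2 * w\<^sup>2" using assms(5) by (simp add: mult_left_mono)
  finally have "(t * r)\<^sup>2 \<le> (M * \<bar>w\<bar>)\<^sup>2" by (simp only: power_mult_distrib power2_abs)
  then have "t * r \<le> M * \<bar>w\<bar>" by (rule power2_le_imp_le) (simp add: assms(2))
  then have "t \<le> M * \<bar>w\<bar> / r" by (simp add: pos_le_divide_eq[OF r(1)])
  then show ?thesis by (simp add: r_def)
qed

definition mean_mat :: "('n::finite \<Rightarrow> real^'p::finite^'p) \<Rightarrow> real^'n \<Rightarrow> real^'p^'p" where
  "mean_mat S D = (1 / real CARD('n)) *\<^sub>R (\<Sum>i\<in>UNIV. (D$i) *\<^sub>R S i)"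

lemma Qmat_eq_matrix_inv: "Qmat \<gamma> S D = matrix_inv (mean_mat S D + \<gamma> *\<^sub>R mat 1)"
  by (simp add: Qmat_def mean_mat_def)

lemma mean_mat_mult_vec:
  "mean_mat S D *v y = (1 / real CARD('n)) *\<^sub>R (\<Sum>i\<in>UNIV. (D$i) *\<^sub>R (S i *v y))"
  for S :: "'n::finite \<Rightarrow> real^'p::finite^'p"
  by (simp add: mean_mat_def sum_matrix_vector_mult scaleR_matrix_vector_assoc[symmetric])

lemma mean_mat_quad:
  "x \<bullet> (mean_mat S D *v y) = (1 / real CARD('n)) * (\<Sum>i\<in>UNIV. D$i * (x \<bullet> (S i *v y)))"
  for S :: "'n::finite \<Rightarrow> real^'p::finite^'p"
  by (simp add: mean_mat_mult_vec inner_sum_right)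

locale psd_family =
  fixes \<gamma> :: real and S :: "'n::finite \<Rightarrow> real^'p::finite^'p"
  assumes gamma_pos: "0 < \<gamma>"
    and S_nonneg_sym: "\<And>i. nonneg_sym (S i)"
    and S_nonzero: "\<And>i. S i \<noteq> 0"
begin

abbreviation A :: "real^'n \<Rightarrow> real^'p^'p" where "A D \<equiv> mean_mat S D"

abbreviation Q :: "real^'n \<Rightarrow> real^'p^'p" where "Q D \<equiv> Qmat \<gamma> S D"

lemma A_inner_commute: "x \<bullet> (A D *v y) = (A D *v x) \<bullet> y"
  unfolding mean_mat_quad
  by (simp add: mean_mat_mult_vec inner_sum_left nonneg_sym_inner_commute[OF S_nonneg_sym])

lemma A_nonneg: "0 \<le> D \<Longrightarrow> 0 \<le> x \<bullet> (A D *v x)"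
  unfolding mean_mat_quad using S_nonneg_sym
  by (intro mult_nonneg_nonneg sum_nonneg) (auto simp: less_eq_vec_def nonneg_sym_def)

lemma A_mono: "D \<le> E \<Longrightarrow> x \<bullet> (A D *v x) \<le> x \<bullet> (A E *v x)"
  unfolding mean_mat_quad using S_nonneg_sym
  by (intro mult_left_mono sum_mono mult_right_mono) (auto simp: less_eq_vec_def nonneg_sym_def)

lemma shifted_inj:
  assumes "0 \<le> D"
  shows "inj ((*v) (A D + \<gamma> *\<^sub>R mat 1))"
proof (rule injI)
  fix x y assume "(A D + \<gamma> *\<^sub>R mat 1) *v x = (A D + \<gamma> *\<^sub>R mat 1) *v y"
  then have "A D *v (x - y) + \<gamma> *\<^sub>R (x - y) = 0"
    by (simp add: matrix_vector_mult_add_rdistrib scaleR_mat_1_mult_vec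
        matrix_vector_mult_diff_distrib algebra_simps)
  then have "(x - y) \<bullet> (A D *v (x - y)) + \<gamma> * ((x - y) \<bullet> (x - y)) = 0"
    by (metis inner_add_right inner_scaleR_right inner_zero_right)
  moreover have "0 \<le> (x - y) \<bullet> (A D *v (x - y))" by (rule A_nonneg[OF assms])
  ultimately have "\<gamma> * ((x - y) \<bullet> (x - y)) \<le> 0" by linarith
  then have "(x - y) \<bullet> (x - y) \<le> 0" using gamma_pos by (simp add: mult_le_0_iff)
  then show "x = y" by (metis inner_ge_zero order_antisym inner_eq_zero_iff right_minus_eq)
qed

lemma Q_inverse:
  assumes "0 \<le> D"
  shows "A D *v (Q D *v v) + \<gamma> *\<^sub>R (Q D *v v) = v" "Q D *v (A D *v y + \<gamma> *\<^sub>R y) = y"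
proof -
  note inv = matrix_inv_of_inj[OF shifted_inj[OF assms], folded Qmat_eq_matrix_inv]
  have "((A D + \<gamma> *\<^sub>R mat 1) ** Q D) *v v = A D *v (Q D *v v) + \<gamma> *\<^sub>R (Q D *v v)"
    by (simp only: matrix_vector_mul_assoc[symmetric] shifted_mult_vec)
  then show "A D *v (Q D *v v) + \<gamma> *\<^sub>R (Q D *v v) = v" using inv by auto
  have "(Q D ** (A D + \<gamma> *\<^sub>R mat 1)) *v y = Q D *v (A D *v y + \<gamma> *\<^sub>R y)"
    by (simp only: matrix_vector_mul_assoc[symmetric] shifted_mult_vec)
  then show "Q D *v (A D *v y + \<gamma> *\<^sub>R y) = y" using inv by auto
qed

lemma Q_inner_commute:
  assumes "0 \<le> D"
  shows "x \<bullet> (Q D *v y) = (Q D *v x) \<bullet> y"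
proof -
  let ?B = "\<lambda>z. A D *v z + \<gamma> *\<^sub>R z"
  have B: "w \<bullet> ?B z = ?B w \<bullet> z" for w z
    by (simp add: inner_add_right inner_add_left A_inner_commute)
  have "x \<bullet> (Q D *v y) = ?B (Q D *v x) \<bullet> (Q D *v y)" using Q_inverse(1)[OF assms] by simp
  also have "\<dots> = (Q D *v x) \<bullet> ?B (Q D *v y)" by (rule B[symmetric])
  also have "\<dots> = (Q D *v x) \<bullet> y" using Q_inverse(1)[OF assms] by simp
  finally show ?thesis .
qed

lemma Q_quad:
  assumes "0 \<le> D"
  shows "u \<bullet> (Q D *v u) = (Q D *v u) \<bullet> (A D *v (Q D *v u)) + \<gamma> * ((Q D *v u) \<bullet> (Q D *v u))"
proof -
  define y where "y = Q D *v u"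
  have "u = A D *v y + \<gamma> *\<^sub>R y" using Q_inverse(1)[OF assms] by (simp add: y_def)
  then have "u \<bullet> y = y \<bullet> (A D *v y) + \<gamma> * (y \<bullet> y)"
    by (metis inner_add_left inner_commute inner_scaleR_left)
  then show ?thesis by (simp add: y_def)
qed

lemma Q_quad_nonneg: "0 \<le> D \<Longrightarrow> 0 \<le> u \<bullet> (Q D *v u)"
  using Q_quad A_nonneg gamma_pos by simp

lemma Q_quad_pos:
  assumes "0 \<le> D" "u \<noteq> 0"
  shows "0 < u \<bullet> (Q D *v u)"
proof -
  have "Q D *v u \<noteq> 0" using Q_inverse(1)[OF assms(1), of u] assms(2) by auto
  then show ?thesis
    using Q_quad[OF assms(1)] A_nonneg[OF assms(1)] gamma_pos by (simp add: add_nonneg_pos)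
qed

lemma Q_quad_le:
  assumes "0 \<le> D"
  shows "u \<bullet> (Q D *v u) \<le> (u \<bullet> u) / \<gamma>"
proof -
  define y where "y = Q D *v u"
  define a where "a = A D *v y"
  have ay: "0 \<le> a \<bullet> y" using A_nonneg[OF assms, of y] by (simp add: a_def inner_commute)
  have "u = a + \<gamma> *\<^sub>R y" using Q_inverse(1)[OF assms] by (simp add: a_def y_def)
  then have "u \<bullet> u = a \<bullet> a + 2 * \<gamma> * (a \<bullet> y) + \<gamma> * \<gamma> * (y \<bullet> y)"
    by (simp add: inner_add_left inner_add_right inner_commute[of y a] algebra_simps)
  moreover have "u \<bullet> (Q D *v u) = a \<bullet> y + \<gamma> * (y \<bullet> y)"
    using Q_quad[OF assms] by (simp add: a_def y_def inner_commute)
  ultimately have "\<gamma> * (u \<bullet> (Q D *v u)) \<le> u \<bullet> u"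
    using ay gamma_pos by (simp add: algebra_simps)
  then show ?thesis using gamma_pos by (simp add: le_divide_eq mult.commute)
qed

lemma resolvent_identity:
  assumes "0 \<le> D" "0 \<le> D'"
  shows "Q D *v v - Q D' *v v = Q D *v (A D' *v (Q D' *v v) - A D *v (Q D' *v v))"
proof -
  define w where "w = Q D' *v v"
  have v: "(A D *v w + \<gamma> *\<^sub>R w) + (A D' *v w - A D *v w) = v"
    using Q_inverse(1)[OF assms(2), of v] by (simp add: w_def algebra_simps)
  have "Q D *v v = w + Q D *v (A D' *v w - A D *v w)"
    unfolding v[symmetric] matrix_vector_right_distrib[of "Q D" "A D *v w + \<gamma> *\<^sub>R w"]
    by (simp only: Q_inverse(2)[OF assms(1)])
  then show ?thesis by (simp add: w_def)
qed

lemma Q_quad_diff: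
  assumes "0 \<le> D" "0 \<le> D'"
  shows "u \<bullet> (Q D *v u) - u \<bullet> (Q D' *v u)
    = (1 / real CARD('n)) * (\<Sum>j\<in>UNIV. (D'$j - D$j) * ((Q D *v u) \<bullet> (S j *v (Q D' *v u))))"
proof -
  have "u \<bullet> (Q D *v u) - u \<bullet> (Q D' *v u) = u \<bullet> (Q D *v u - Q D' *v u)"
    by (simp only: inner_diff_right)
  also have "\<dots> = (Q D *v u) \<bullet> (A D' *v (Q D' *v u) - A D *v (Q D' *v u))"
    by (simp only: resolvent_identity[OF assms] Q_inner_commute[OF assms(1)])
  also have "\<dots>
      = (1 / real CARD('n)) * (\<Sum>j\<in>UNIV. (D'$j - D$j) * ((Q D *v u) \<bullet> (S j *v (Q D' *v u))))"
    by (simp add: inner_diff_right mean_mat_quad sum_subtractf left_diff_distrib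
        diff_divide_distrib)
  finally show ?thesis .
qed

lemma phi_nonneg: "0 \<le> phi \<gamma> S D"
  unfolding phi_def by (rule onorm_pos_le) simp

lemma phi_norm_le: "norm ((mat 1 - \<gamma> *\<^sub>R Q D) *v v) \<le> phi \<gamma> S D * norm v"
  unfolding phi_def by (rule onorm) simp

lemma I_minus_Q_mult:
  assumes "0 \<le> D"
  shows "(mat 1 - \<gamma> *\<^sub>R Q D) *v (A D *v y + \<gamma> *\<^sub>R y) = A D *v y"
proof -
  have "(mat 1 - \<gamma> *\<^sub>R Q D) *v z = z - \<gamma> *\<^sub>R (Q D *v z)" for z
    by (simp add: matrix_vector_mult_diff_rdistrib flip: scaleR_matrix_vector_assoc)
  then show ?thesis using Q_inverse(2)[OF assms] by simp
qed

lemma phi_less_1: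
  assumes "0 \<le> D"
  shows "phi \<gamma> S D < 1"
proof -
  define M where "M = onorm ((*v) (A D))"
  have M: "0 \<le> M" unfolding M_def by (rule onorm_pos_le) simp
  have "phi \<gamma> S D \<le> M / sqrt (M\<^sup>2 + \<gamma>\<^sup>2)"
    unfolding phi_def
  proof (rule onorm_le)
    fix v
    define y where "y = Q D *v v"
    have v: "v = A D *v y + \<gamma> *\<^sub>R y" using Q_inverse(1)[OF assms] by (simp add: y_def)
    have "norm (A D *v y) \<le> M * norm y" unfolding M_def by (rule onorm) simp
    moreover have "(norm (A D *v y))\<^sup>2 + \<gamma>\<^sup>2 * (norm y)\<^sup>2 \<le> (norm v)\<^sup>2"
      unfolding v using A_nonneg[OF assms, of y] gamma_pos
      by (intro norm_add_scaleR_ge) (simp_all add: inner_commute)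
    ultimately have "norm (A D *v y) \<le> M / sqrt (M\<^sup>2 + \<gamma>\<^sup>2) * \<bar>norm v\<bar>"
      using M gamma_pos by (intro pythagorean_ratio_bound) simp_all
    then show "norm ((mat 1 - \<gamma> *\<^sub>R Q D) *v v) \<le> M / sqrt (M\<^sup>2 + \<gamma>\<^sup>2) * norm v"
      using I_minus_Q_mult[OF assms] v by simp
  qed
  also have "\<dots> < 1"
  proof -
    have "M < sqrt (M\<^sup>2 + \<gamma>\<^sup>2)" using gamma_pos by (intro real_less_rsqrt) simp
    then show ?thesis using M by (simp add: divide_less_eq not_less add_nonneg_nonneg)
  qed
  finally show ?thesis .
qed

lemma A_quad_le_phi:
  assumes "0 \<le> D" "D \<le> E"
  shows "(Q D *v u) \<bullet> (A D *v (Q D *v u)) \<le> phi \<gamma> S E * (u \<bullet> (Q D *v u))"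
proof -
  define y where "y = Q D *v u"
  define c where "c = phi \<gamma> S E"
  define t where "t = norm (A E *v y)"
  define s where "s = norm y"
  have E: "0 \<le> E" using assms by (rule order_trans)
  have c: "0 \<le> c" "c < 1" unfolding c_def using phi_nonneg phi_less_1[OF E] by auto
  have "t \<le> c * norm (A E *v y + \<gamma> *\<^sub>R y)"
    using phi_norm_le[of E "A E *v y + \<gamma> *\<^sub>R y"] I_minus_Q_mult[OF E] by (simp add: t_def c_def)
  also have "\<dots> \<le> c * (t + \<gamma> * s)"
    using norm_triangle_ineq[of "A E *v y" "\<gamma> *\<^sub>R y"] c gamma_pos
    by (intro mult_left_mono) (simp_all add: t_def s_def)
  finally have ts: "(1 - c) * t \<le> c * \<gamma> * s" by (simp add: algebra_simps)
  have "y \<bullet> (A D *v y) \<le> y \<bullet> (A E *v y)" using A_mono[OF assms(2)] .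
  also have "\<dots> \<le> s * t" unfolding s_def t_def by (rule norm_cauchy_schwarz)
  finally have "(1 - c) * (y \<bullet> (A D *v y)) \<le> (1 - c) * (s * t)"
    using c by (intro mult_left_mono) simp_all
  also have "\<dots> \<le> s * (c * \<gamma> * s)"
    using ts by (simp add: s_def mult.left_commute mult_left_mono)
  also have "\<dots> = c * \<gamma> * (y \<bullet> y)" by (simp add: s_def dot_square_norm power2_eq_square)
  finally have "y \<bullet> (A D *v y) \<le> c * (y \<bullet> (A D *v y) + \<gamma> * (y \<bullet> y))"
    by (simp add: algebra_simps)
  then show ?thesis using Q_quad[OF assms(1), of u] by (simp add: y_def c_def)
qed

lemma Q_quad_rel_dist:
  assumes "0 \<le> D" "0 \<le> D'" "D \<le> E" "D' \<le> E'" "0 \<le> e"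
    and close: "\<And>j. \<bar>D$j - D'$j\<bar> \<le> e * sqrt (D$j * D'$j)"
  shows "\<bar>u \<bullet> (Q D *v u) - u \<bullet> (Q D' *v u)\<bar>
    \<le> e * (sqrt (phi \<gamma> S E * (u \<bullet> (Q D *v u))) * sqrt (phi \<gamma> S E' * (u \<bullet> (Q D' *v u))))"
proof -
  define n where "n = real CARD('n)"
  define x where "x = Q D *v u"
  define y where "y = Q D' *v u"
  define a where "a j = D$j * (x \<bullet> (S j *v x))" for j
  define b where "b j = D'$j * (y \<bullet> (S j *v y))" for j
  have D: "0 \<le> D$j" "0 \<le> D'$j" for j using assms(1,2) by (simp_all add: less_eq_vec_def)
  have S: "0 \<le> z \<bullet> (S j *v z)" for z j using S_nonneg_sym by (simp add: nonneg_sym_def)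
  have ab: "0 \<le> a j" "0 \<le> b j" for j by (simp_all add: a_def b_def D S)
  have summand: "\<bar>(D'$j - D$j) * (x \<bullet> (S j *v y))\<bar> \<le> e * (sqrt (a j) * sqrt (b j))" for j
  proof -
    have "\<bar>(D'$j - D$j) * (x \<bullet> (S j *v y))\<bar>
        \<le> e * sqrt (D$j * D'$j) * (sqrt (x \<bullet> (S j *v x)) * sqrt (y \<bullet> (S j *v y)))"
      unfolding abs_mult abs_minus_commute[of "D'$j"]
      using close[of j] nonneg_sym_abs_inner_le[OF S_nonneg_sym] assms(5)
      by (intro mult_mono) simp_all
    also have "\<dots> = e * (sqrt (a j) * sqrt (b j))"
      using D by (simp add: a_def b_def real_sqrt_mult)
    finally show ?thesis .
  qed
  have "\<bar>u \<bullet> (Q D *v u) - u \<bullet> (Q D' *v u)\<bar> = (1 / n) * \<bar>\<Sum>j\<in>UNIV. (D'$j - D$j) * (x \<bullet> (S j *v y))\<bar>"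
    using Q_quad_diff[OF assms(1,2)] by (simp add: n_def x_def y_def abs_mult)
  also have "\<dots> \<le> (1 / n) * (e * (\<Sum>j\<in>UNIV. sqrt (a j) * sqrt (b j)))"
    using summand
    by (intro mult_left_mono order_trans[OF sum_abs]) (simp_all add: n_def sum_mono sum_distrib_left)
  also have "\<dots> \<le> (1 / n) * (e * (sqrt (\<Sum>j\<in>UNIV. a j) * sqrt (\<Sum>j\<in>UNIV. b j)))"
    using ab assms(5) by (intro mult_left_mono sum_sqrt_mult_le) (simp_all add: n_def)
  also have "\<dots> = e * (sqrt (x \<bullet> (A D *v x)) * sqrt (y \<bullet> (A D' *v y)))"
  proof -
    have "sqrt (X / n) * sqrt (Y / n) = sqrt X * sqrt Y / n" for X Y
      by (simp add: n_def real_sqrt_divide)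
    then show ?thesis by (simp add: a_def b_def n_def mean_mat_quad)
  qed
  also have "\<dots> \<le> e * (sqrt (phi \<gamma> S E * (u \<bullet> (Q D *v u))) * sqrt (phi \<gamma> S E' * (u \<bullet> (Q D' *v u))))"
    using A_quad_le_phi[OF assms(1,3)] A_quad_le_phi[OF assms(2,4)] assms(5)
    by (intro mult_left_mono mult_mono)
      (simp_all add: x_def y_def phi_nonneg Q_quad_nonneg[OF assms(1)] A_nonneg[OF assms(2)])
  finally show ?thesis .
qed

section \<open>The fixed-point map\<close>

definition gram :: "'n \<Rightarrow> 'p \<Rightarrow> real^'p" where
  "gram = (SOME u. \<forall>i a b. S i $ a $ b = (\<Sum>l\<in>UNIV. u i l $ a * u i l $ b))"

lemma gram: "S i $ a $ b = (\<Sum>l\<in>UNIV. gram i l $ a * gram i l $ b)"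
proof -
  have "\<exists>u :: 'n \<Rightarrow> 'p \<Rightarrow> real^'p. \<forall>i a b. S i $ a $ b = (\<Sum>l\<in>UNIV. u i l $ a * u i l $ b)"
    using nonneg_sym_gram[OF S_nonneg_sym] by (intro choice allI) blast
  then have "\<forall>i a b. S i $ a $ b = (\<Sum>l\<in>UNIV. gram i l $ a * gram i l $ b)"
    unfolding gram_def by (rule someI_ex)
  then show ?thesis by blast
qed

lemma gram_nonzero: "\<exists>l. gram i l \<noteq> 0"
proof (rule ccontr)
  assume "\<nexists>l. gram i l \<noteq> 0"
  then have "S i = 0" by (simp add: vec_eq_iff gram)
  then show False using S_nonzero by blast
qed

definition Tmap :: "real^'n \<Rightarrow> real^'n" where
  "Tmap D = (\<chi> i. (1 / real CARD('n)) * trace (S i ** Q D))"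

lemma Lambda_eq_iff: "Lambda_eq \<gamma> S E L \<longleftrightarrow> pos_diag L \<and> L = Tmap (damped E L)"
  by (simp add: Lambda_eq_def Tmap_def Qmat_def damped_def vec_eq_iff)

lemma Tmap_eq_sum: "Tmap D $ i = (1 / real CARD('n)) * (\<Sum>l\<in>UNIV. gram i l \<bullet> (Q D *v gram i l))"
  using trace_gram_mult[where M = "S i" and u = "gram i" and L = UNIV and X = "Q D"] gram
  by (simp add: Tmap_def)

lemma Tmap_pos:
  assumes "0 \<le> D"
  shows "0 < Tmap D $ i"
proof -
  obtain k where k: "gram i k \<noteq> 0" using gram_nonzero by blast
  have "0 < gram i k \<bullet> (Q D *v gram i k)" by (rule Q_quad_pos[OF assms k])
  also have "\<dots> \<le> (\<Sum>l\<in>UNIV. gram i l \<bullet> (Q D *v gram i l))"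
    by (rule member_le_sum) (simp_all add: Q_quad_nonneg[OF assms])
  finally show ?thesis by (simp add: Tmap_eq_sum)
qed

definition Tmap_bound :: "'n \<Rightarrow> real" where
  "Tmap_bound i = (1 / real CARD('n)) * (\<Sum>l\<in>UNIV. (gram i l \<bullet> gram i l) / \<gamma>)"

lemma Tmap_le_bound: "0 \<le> D \<Longrightarrow> Tmap D $ i \<le> Tmap_bound i"
  unfolding Tmap_eq_sum Tmap_bound_def by (intro mult_left_mono sum_mono Q_quad_le) simp_all

lemma Tmap_bound_nonneg: "0 \<le> Tmap_bound i"
  using Tmap_pos[of 0 i] Tmap_le_bound[of 0 i] by simp

lemma Tmap_rel_dist:
  assumes "0 \<le> D" "0 \<le> D'" "D \<le> E" "D' \<le> E'" "0 \<le> e"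
    and "\<And>j. \<bar>D$j - D'$j\<bar> \<le> e * sqrt (D$j * D'$j)"
  shows "\<bar>Tmap D $ i - Tmap D' $ i\<bar>
    \<le> e * (sqrt (phi \<gamma> S E * Tmap D $ i) * sqrt (phi \<gamma> S E' * Tmap D' $ i))"
proof -
  define n where "n = real CARD('n)"
  define q where "q l = phi \<gamma> S E * (gram i l \<bullet> (Q D *v gram i l))" for l
  define q' where "q' l = phi \<gamma> S E' * (gram i l \<bullet> (Q D' *v gram i l))" for l
  have q: "0 \<le> q l" "0 \<le> q' l" for l
    by (simp_all add: q_def q'_def phi_nonneg Q_quad_nonneg assms(1,2))
  have summand: "\<bar>gram i l \<bullet> (Q D *v gram i l) - gram i l \<bullet> (Q D' *v gram i l)\<bar>
      \<le> e * (sqrt (q l) * sqrt (q' l))" for l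
    unfolding q_def q'_def by (rule Q_quad_rel_dist[OF assms])
  have "\<bar>Tmap D $ i - Tmap D' $ i\<bar>
      = (1 / n) * \<bar>\<Sum>l\<in>UNIV. gram i l \<bullet> (Q D *v gram i l) - gram i l \<bullet> (Q D' *v gram i l)\<bar>"
    by (simp add: Tmap_eq_sum n_def sum_subtractf abs_divide flip: diff_divide_distrib)
  also have "\<dots> \<le> (1 / n) * (\<Sum>l\<in>UNIV. e * (sqrt (q l) * sqrt (q' l)))"
    using summand by (intro mult_left_mono order_trans[OF sum_abs] sum_mono) (simp_all add: n_def)
  also have "\<dots> \<le> (1 / n) * (e * (sqrt (\<Sum>l\<in>UNIV. q l) * sqrt (\<Sum>l\<in>UNIV. q' l)))"
    unfolding sum_distrib_left[symmetric]
    using q assms(5) by (intro mult_left_mono sum_sqrt_mult_le) (simp_all add: n_def)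
  also have "\<dots> = e * (sqrt ((\<Sum>l\<in>UNIV. q l) / n) * sqrt ((\<Sum>l\<in>UNIV. q' l) / n))"
    by (simp add: n_def real_sqrt_divide)
  also have "\<dots> = e * (sqrt (phi \<gamma> S E * Tmap D $ i) * sqrt (phi \<gamma> S E' * Tmap D' $ i))"
    by (simp add: Tmap_eq_sum q_def q'_def n_def flip: sum_distrib_left)
  finally show ?thesis .
qed

lemma Tmap_damped_d_s_le:
  assumes E: "pos_diag E" "pos_diag E'" and L: "pos_diag L" "pos_diag L'"
    and dE: "d_s E E' \<le> e" and dL: "d_s L L' \<le> e"
  shows "d_s (Tmap (damped E L)) (Tmap (damped E' L')) \<le> max (phi \<gamma> S E) (phi \<gamma> S E') * e"
proof -
  define D where "D = damped E L"
  define D' where "D' = damped E' L'"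
  define m where "m = max (phi \<gamma> S E) (phi \<gamma> S E')"
  have D: "pos_diag D" "D \<le> E" "pos_diag D'" "D' \<le> E'"
    unfolding D_def D'_def using damped_pos_le E L pos_diag_nonneg by blast+
  have D0: "0 \<le> D" "0 \<le> D'" using D pos_diag_nonneg by blast+
  have T: "pos_diag (Tmap D)" "pos_diag (Tmap D')"
    using Tmap_pos[OF D0(1)] Tmap_pos[OF D0(2)] by (simp_all add: pos_diag_def)
  have e: "0 \<le> e" using d_s_nonneg[OF E] dE by linarith
  have m0: "0 \<le> m" using phi_nonneg[of E] by (simp add: m_def le_max_iff_disj)
  have "sqrt (phi \<gamma> S E * phi \<gamma> S E') \<le> sqrt (m * m)"
    using m0 by (intro real_sqrt_le_mono mult_mono) (simp_all add: m_def phi_nonneg)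
  then have m: "sqrt (phi \<gamma> S E * phi \<gamma> S E') \<le> m" using m0 by simp
  have "\<bar>Tmap D $ i - Tmap D' $ i\<bar> \<le> m * e * sqrt (Tmap D $ i * Tmap D' $ i)" for i
  proof -
    have "\<bar>Tmap D $ i - Tmap D' $ i\<bar>
        \<le> e * (sqrt (phi \<gamma> S E * Tmap D $ i) * sqrt (phi \<gamma> S E' * Tmap D' $ i))"
      using D D0 e damped_rel_dist[OF E L dE dL] unfolding D_def D'_def
      by (intro Tmap_rel_dist) simp_all
    also have "\<dots> = e * sqrt (phi \<gamma> S E * phi \<gamma> S E') * sqrt (Tmap D $ i * Tmap D' $ i)"
      by (simp add: real_sqrt_mult algebra_simps)
    also have "\<dots> \<le> e * m * sqrt (Tmap D $ i * Tmap D' $ i)"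
      using m e Tmap_pos[OF D0(1), of i] Tmap_pos[OF D0(2), of i]
      by (intro mult_right_mono mult_left_mono) simp_all
    finally show ?thesis by (simp add: mult.commute)
  qed
  then have "d_s (Tmap D) (Tmap D') \<le> m * e" using d_s_le_iff[OF T] by blast
  then show ?thesis by (simp add: D_def D'_def m_def)
qed

text \<open>Applying the contraction estimate with \<open>e = max (d_s E E') (d_s L L')\<close> avoids any a priori
  bound on \<open>d_s L L'\<close>: since \<open>max (phi E) (phi E') < 1\<close>, the maximum cannot be \<open>d_s L L'\<close>
  unless both distances vanish.\<close>

lemma Lambda_eq_d_s_le:
  assumes E: "pos_diag E" "pos_diag E'"
    and L: "Lambda_eq \<gamma> S E L" "Lambda_eq \<gamma> S E' L'"
  shows "d_s L L' \<le> max (phi \<gamma> S E) (phi \<gamma> S E') * d_s E E'"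
proof -
  define m where "m = max (phi \<gamma> S E) (phi \<gamma> S E')"
  have pL: "pos_diag L" "pos_diag L'" and fixed: "L = Tmap (damped E L)" "L' = Tmap (damped E' L')"
    using L by (simp_all add: Lambda_eq_iff)
  have m: "0 \<le> m" "m < 1"
    using phi_nonneg[of E] phi_less_1[OF pos_diag_nonneg[OF E(1)]]
      phi_less_1[OF pos_diag_nonneg[OF E(2)]]
    by (simp_all add: m_def le_max_iff_disj)
  have dE: "0 \<le> d_s E E'" by (rule d_s_nonneg[OF E])
  have contr: "d_s L L' \<le> m * max (d_s E E') (d_s L L')"
    using Tmap_damped_d_s_le[OF E pL, of "max (d_s E E') (d_s L L')"] fixed by (simp add: m_def)
  have "d_s L L' \<le> d_s E E'"
  proof (rule ccontr)
    assume less: "\<not> d_s L L' \<le> d_s E E'"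
    then have "(1 - m) * d_s L L' \<le> 0" using contr by (simp add: algebra_simps)
    then have "d_s L L' \<le> 0" using m by (simp add: mult_le_0_iff)
    then show False using less dE by linarith
  qed
  then show ?thesis using contr by (simp add: m_def)
qed

lemma Lambda_eq_unique:
  assumes "pos_diag E" "Lambda_eq \<gamma> S E L" "Lambda_eq \<gamma> S E L'"
  shows "L = L'"
  using Lambda_eq_d_s_le[OF assms(1,1,2,3)] assms(2,3)
  by (intro d_s_le_0_imp_eq) (simp_all add: d_s_self Lambda_eq_def)

lemma Tmap_diff_le_bound:
  assumes "0 \<le> D" "0 \<le> D'" "D \<le> E" "D' \<le> E" "0 \<le> e"
    and "\<And>j. \<bar>D$j - D'$j\<bar> \<le> e * sqrt (D$j * D'$j)"
  shows "\<bar>Tmap D $ i - Tmap D' $ i\<bar> \<le> e * Tmap_bound i"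
proof -
  have E: "0 \<le> E" using assms(1,3) by (rule order_trans)
  have le: "phi \<gamma> S E * Tmap X $ i \<le> Tmap_bound i" if "0 \<le> X" for X
    using phi_nonneg phi_less_1[OF E] Tmap_pos[OF that, of i] Tmap_le_bound[OF that, of i]
    by (meson mult_left_le_one_le less_imp_le order_trans)
  have "\<bar>Tmap D $ i - Tmap D' $ i\<bar>
      \<le> e * (sqrt (phi \<gamma> S E * Tmap D $ i) * sqrt (phi \<gamma> S E * Tmap D' $ i))"
    by (rule Tmap_rel_dist[OF assms])
  also have "\<dots> \<le> e * (sqrt (Tmap_bound i) * sqrt (Tmap_bound i))"
    using le assms(1,2,5) Tmap_pos[OF assms(2), of i] phi_nonneg[of E]
    by (intro mult_left_mono mult_mono real_sqrt_le_mono) (simp_all add: Tmap_bound_nonneg)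
  also have "\<dots> = e * Tmap_bound i"
    using Tmap_bound_nonneg[of i] by simp
  finally show ?thesis .
qed

lemma Tmap_damped_lipschitz:
  assumes E: "pos_diag E"
  shows "((\<Sum>j\<in>UNIV. E$j) * (\<Sum>i\<in>UNIV. Tmap_bound i))-lipschitz_on {L. 0 \<le> L}
    (\<lambda>L. Tmap (damped E L))"
proof (rule lipschitz_onI)
  fix L L' :: "real^'n" assume "L \<in> {L. 0 \<le> L}" "L' \<in> {L. 0 \<le> L}"
  then have L: "0 \<le> L" "0 \<le> L'" by simp_all
  define e where "e = (\<Sum>j\<in>UNIV. E$j) * dist L L'"
  have E0: "0 \<le> E$j" for j using E by (simp add: pos_diag_def less_imp_le)
  have e: "0 \<le> e" by (simp add: e_def E0 sum_nonneg)
  have D: "0 \<le> damped E L" "damped E L \<le> E" "0 \<le> damped E L'" "damped E L' \<le> E"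
    using damped_pos_le[OF E] L pos_diag_nonneg by blast+
  have "\<bar>damped E L $ j - damped E L' $ j\<bar> \<le> e * sqrt (damped E L $ j * damped E L' $ j)" for j
  proof -
    have "\<bar>L$j - L'$j\<bar> \<le> dist L L'"
      using component_le_norm_cart[of "L - L'" j] by (simp add: dist_norm)
    then have "E$j * \<bar>L$j - L'$j\<bar> \<le> e"
      unfolding e_def using E0 by (intro mult_mono member_le_sum) (simp_all add: sum_nonneg)
    moreover have "0 \<le> sqrt (damped E L $ j * damped E L' $ j)"
      using D(1,3) by (simp add: less_eq_vec_def)
    ultimately show ?thesis
      using damped_lipschitz[OF E L, of j] by (meson mult_right_mono order_trans)
  qed
  then have "\<bar>Tmap (damped E L) $ i - Tmap (damped E L') $ i\<bar> \<le> e * Tmap_bound i" for i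
    using D e by (intro Tmap_diff_le_bound) simp_all
  then have "dist (Tmap (damped E L)) (Tmap (damped E L')) \<le> e * (\<Sum>i\<in>UNIV. Tmap_bound i)"
    unfolding dist_norm sum_distrib_left by (intro order_trans[OF norm_le_l1_cart] sum_mono) simp
  then show "dist (Tmap (damped E L)) (Tmap (damped E L'))
      \<le> (\<Sum>j\<in>UNIV. E$j) * (\<Sum>i\<in>UNIV. Tmap_bound i) * dist L L'"
    by (simp add: e_def mult_ac)
qed (use E Tmap_bound_nonneg in
    \<open>auto simp: pos_diag_def less_imp_le intro!: mult_nonneg_nonneg sum_nonneg\<close>)

lemma Lambda_eq_exists:
  assumes E: "pos_diag E"
  obtains L where "Lambda_eq \<gamma> S E L"
proof -
  define K where "K = cbox 0 (\<chi> i. Tmap_bound i)"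
  define F where "F = (\<lambda>L. Tmap (damped E L))"
  have K: "K \<subseteq> {L. 0 \<le> L}" by (auto simp: K_def mem_box_cart less_eq_vec_def)
  have D: "0 \<le> damped E L" if "L \<in> K" for L
    using that K damped_pos_le[OF E] pos_diag_nonneg by blast
  have F_pos: "pos_diag (F L)" if "L \<in> K" for L
    using Tmap_pos[OF D[OF that]] by (simp add: F_def pos_diag_def)
  have "F \<in> K \<rightarrow> K"
  proof
    fix L assume "L \<in> K"
    then show "F L \<in> K"
      using F_pos[OF \<open>L \<in> K\<close>] Tmap_le_bound[OF D[OF \<open>L \<in> K\<close>]]
      by (auto simp: K_def F_def mem_box_cart pos_diag_def less_imp_le)
  qed
  moreover have "continuous_on K F"
    unfolding F_def
    by (rule lipschitz_on_continuous_on[OF lipschitz_on_subset[OF Tmap_damped_lipschitz[OF E] K]])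
  moreover have "0 \<in> K" using Tmap_bound_nonneg by (simp add: K_def mem_box_cart)
  ultimately obtain L where "L \<in> K" "F L = L"
    using brouwer[of K F] by (auto simp: K_def simp del: mem_box)
  moreover note F_pos[OF \<open>L \<in> K\<close>]
  ultimately have "Lambda_eq \<gamma> S E L" by (simp add: Lambda_eq_iff F_def)
  then show ?thesis by (rule that)
qed

lemma LambdaS_eq:
  assumes "pos_diag E"
  shows "Lambda_eq \<gamma> S E (LambdaS \<gamma> S E)"
proof -
  obtain L where L: "Lambda_eq \<gamma> S E L" using Lambda_eq_exists[OF assms] .
  show ?thesis
    unfolding LambdaS_def by (rule theI[of _ L]) (use L Lambda_eq_unique[OF assms] in blast)+
qed

lemma LambdaS_pos: "pos_diag E \<Longrightarrow> pos_diag (LambdaS \<gamma> S E)"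
  using LambdaS_eq by (simp add: Lambda_eq_def)

lemma LambdaS_d_s_le:
  assumes "pos_diag E" "pos_diag E'"
  shows "d_s (LambdaS \<gamma> S E) (LambdaS \<gamma> S E') \<le> max (phi \<gamma> S E) (phi \<gamma> S E') * d_s E E'"
  using Lambda_eq_d_s_le[OF assms LambdaS_eq[OF assms(1)] LambdaS_eq[OF assms(2)]] .

lemma stable_LambdaS: "stable (LambdaS \<gamma> S)"
  unfolding stable_def
proof (intro allI impI)
  fix E E' :: "real^'n" assume E: "pos_diag E" "pos_diag E'"
  have "max (phi \<gamma> S E) (phi \<gamma> S E') \<le> 1"
    using phi_less_1[OF pos_diag_nonneg[OF E(1)]] phi_less_1[OF pos_diag_nonneg[OF E(2)]] by simp
  then show "d_s (LambdaS \<gamma> S E) (LambdaS \<gamma> S E') \<le> d_s E E'"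
    using LambdaS_d_s_le[OF E] d_s_nonneg[OF E] phi_nonneg[of E]
    by (smt (verit) mult_left_le_one_le le_max_iff_disj)
qed

end

theorem proposition5:
  fixes \<gamma> :: real and S :: "'n::finite \<Rightarrow> real^'p::finite^'p"
  assumes "\<gamma> > 0"
    and "\<And>i. nonneg_sym (S i)"
    and "\<And>i. S i \<noteq> 0"
  shows "(\<forall>\<Delta> \<Delta>'. pos_diag \<Delta> \<longrightarrow> pos_diag \<Delta>' \<longrightarrow>
            d_s (LambdaS \<gamma> S \<Delta>) (LambdaS \<gamma> S \<Delta>')
              \<le> max (phi \<gamma> S \<Delta>) (phi \<gamma> S \<Delta>') * d_s \<Delta> \<Delta>')
         \<and> (\<forall>\<Delta>. pos_diag \<Delta> \<longrightarrow> pos_diag (LambdaS \<gamma> S \<Delta>))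
         \<and> stable (LambdaS \<gamma> S)"
proof -
  interpret psd_family \<gamma> S using assms by unfold_locales
  show ?thesis using LambdaS_d_s_le LambdaS_pos stable_LambdaS by blast
qed

end
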